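(* Let $k\ge2$, let $\mathcal{F}$ be a saturated foliation of normal degree $d$ on $\mathbb{P}^2_k=\mathbb{P}(1,1,k)$, let $\pi:\mathbb{F}_k\to\mathbb{P}^2_k$ be the minimal resolution of $p_2=[0:0:1]$ with exceptional divisor $E$, let $r$ be the algebraic multiplicity of $\mathcal{F}$ at $p_2$ and $\mathcal{G}=\pi^*\mathcal{F}$. Then $\mathcal{G}$ is a Riccati foliation with respect to the natural rational fibration and $E$ is $\mathcal{G}$-invariant if and only if $r=d-k$. In particular, when these equivalent conditions hold, $\mathcal{F}$ has an invariant line.
   Context: $\mathbb{P}(1,1,k)$ is the quotient of $\mathbb{C}^3\setminus\{0\}$ by $t\cdot(x_0,x_1,x_2)=(tx_0,tx_1,t^kx_2)$. A foliation of normal degree $d$ is the class of a nonzero 1-form $\omega=\sum A_idx_i$ with $A_0,A_1$ quasi-homogeneous (weights $1,1,k$) of degree $d-1$, $A_2$ of degree $d-k$, $x_0A_0+x_1A_1+kx_2A_2=0$; saturated means finitely many zeros. Lines are curves $\{ax_0+bx_1=0\}$; a curve $\{P=0\}$ is invariant if $\omega\wedge dP=P\Theta$ for a polynomial 2-form $\Theta$. $E=\pi^{-1}(p_2)$, $E^2=-k$; the natural rational fibration of $\mathbb{F}_k$ has as fibres the strict transforms of lines through $p_2$. Algebraic multiplicity $r$: writing $\eta=\omega|_{x_2=1}=\sum_s\eta_s$ in coordinates $(x,y)=(x_0,x_1)$ with $\eta_s=a_sdx+b_sdy$, $a_s,b_s$ homogeneous of degree $s-1$, $r=\min\{s:\eta_s\ne0\}$.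 Riccati: transverse to the general fibre. *)

theory Defs
  imports "HOL-Analysis.Analysis"
begin

type_synonym cfun3 = "complex \<Rightarrow> complex \<Rightarrow> complex \<Rightarrow> complex"
type_synonym cfun2 = "complex \<Rightarrow> complex \<Rightarrow> complex"

definition poly2 :: "cfun2 \<Rightarrow> bool" where
  "poly2 f \<longleftrightarrow> (\<exists>(c::nat \<Rightarrow> nat \<Rightarrow> complex) N. \<forall>x y.
      f x y = (\<Sum>i\<le>N. \<Sum>j\<le>N. c i j * x^i * y^j))"

definition poly3 :: "cfun3 \<Rightarrow> bool" where
  "poly3 f \<longleftrightarrow> (\<exists>(c::nat \<Rightarrow> nat \<Rightarrow> nat \<Rightarrow> complex) N. \<forall>x y z.
      f x y z = (\<Sum>a\<le>N. \<Sum>b\<le>N. \<Sum>e\<le>N. c a b e * x^a * y^b * z^e))"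

definition qhom :: "nat \<Rightarrow> int \<Rightarrow> cfun3 \<Rightarrow> bool" where
  "qhom k e A \<longleftrightarrow> (\<exists>coef :: nat \<Rightarrow> nat \<Rightarrow> nat \<Rightarrow> complex. \<forall>x y z.
      A x y z = (\<Sum>(a,b,c)\<in>{(a,b,c). int a + int b + int k * int c = e}.
                    coef a b c * x^a * y^b * z^c))"

text \<open>omega = A0 dx0 + A1 dx1 + A2 dx2 defines a foliation of normal degree d.\<close>
definition foliation_P11k :: "nat \<Rightarrow> int \<Rightarrow> cfun3 \<Rightarrow> cfun3 \<Rightarrow> cfun3 \<Rightarrow> bool" where
  "foliation_P11k k d A0 A1 A2 \<longleftrightarrow>
     (\<exists>x y z. A0 x y z \<noteq> 0 \<or> A1 x y z \<noteq> 0 \<or> A2 x y z \<noteq> 0) \<and>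
     qhom k (d - 1) A0 \<and> qhom k (d - 1) A1 \<and> qhom k (d - int k) A2 \<and>
     (\<forall>x y z. x * A0 x y z + y * A1 x y z + of_nat k * z * A2 x y z = 0)"

text \<open>Saturated: finitely many zeros in P(1,1,k), i.e. the common zero set in
  C^3 minus 0 is contained in finitely many weighted C^* orbits.\<close>
definition saturated_fol :: "nat \<Rightarrow> cfun3 \<Rightarrow> cfun3 \<Rightarrow> cfun3 \<Rightarrow> bool" where
  "saturated_fol k A0 A1 A2 \<longleftrightarrow> (\<exists>F :: (complex \<times> complex \<times> complex) set. finite F \<and>
     (\<forall>x0 x1 x2. (x0, x1, x2) \<noteq> (0, 0, 0) \<and> A0 x0 x1 x2 = 0 \<and> A1 x0 x1 x2 = 0 \<and> A2 x0 x1 x2 = 0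
        \<longrightarrow> (\<exists>(p0, p1, p2) \<in> F. \<exists>u. u \<noteq> 0 \<and> x0 = u * p0 \<and> x1 = u * p1 \<and> x2 = u^k * p2)))"

text \<open>Algebraic multiplicity at p2=[0:0:1]: eta = A0(x,y,1) dx + A1(x,y,1) dy,
  eta_s has coefficients homogeneous of degree s-1; r = min {s. eta_s \<noteq> 0}.\<close>
definition alg_mult_p2 :: "cfun3 \<Rightarrow> cfun3 \<Rightarrow> nat \<Rightarrow> bool" where
  "alg_mult_p2 A0 A1 r \<longleftrightarrow> (\<exists>(c0::nat \<Rightarrow> nat \<Rightarrow> complex) c1 N.
     (\<forall>i j. N < i \<or> N < j \<longrightarrow> c0 i j = 0 \<and> c1 i j = 0) \<and>
     (\<forall>x y. A0 x y 1 = (\<Sum>i\<le>N. \<Sum>j\<le>N. c0 i j * x^i * y^j)) \<and>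
     (\<forall>x y. A1 x y 1 = (\<Sum>i\<le>N. \<Sum>j\<le>N. c1 i j * x^i * y^j)) \<and>
     r = (LEAST s. 1 \<le> s \<and> (\<exists>i j. i + j + 1 = s \<and> (c0 i j \<noteq> 0 \<or> c1 i j \<noteq> 0))))"

definition pd3 :: "nat \<Rightarrow> cfun3 \<Rightarrow> cfun3" where
  "pd3 i F x0 x1 x2 = (if i = 0 then deriv (\<lambda>s. F s x1 x2) x0
                       else if i = 1 then deriv (\<lambda>s. F x0 s x2) x1
                       else deriv (\<lambda>s. F x0 x1 s) x2)"

text \<open>{P=0} invariant: omega wedge dP = P Theta, Theta a polynomial 2-form
  Theta01 dx0^dx1 + Theta02 dx0^dx2 + Theta12 dx1^dx2.\<close>
definition invariant_curve :: "cfun3 \<Rightarrow> cfun3 \<Rightarrow> cfun3 \<Rightarrow> cfun3 \<Rightarrow> bool" where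
  "invariant_curve A0 A1 A2 P \<longleftrightarrow> poly3 P \<and> (\<exists>x y z. P x y z \<noteq> 0) \<and>
    (\<exists>T01 T02 T12. poly3 T01 \<and> poly3 T02 \<and> poly3 T12 \<and> (\<forall>x y z.
       A0 x y z * pd3 1 P x y z - A1 x y z * pd3 0 P x y z = P x y z * T01 x y z \<and>
       A0 x y z * pd3 2 P x y z - A2 x y z * pd3 0 P x y z = P x y z * T02 x y z \<and>
       A1 x y z * pd3 2 P x y z - A2 x y z * pd3 1 P x y z = P x y z * T12 x y z))"

definition has_invariant_line :: "cfun3 \<Rightarrow> cfun3 \<Rightarrow> cfun3 \<Rightarrow> bool" where
  "has_invariant_line A0 A1 A2 \<longleftrightarrow> (\<exists>a b. (a, b) \<noteq> (0, 0) \<and>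
     invariant_curve A0 A1 A2 (\<lambda>x0 x1 x2. a * x0 + b * x1))"

text \<open>Invariance of a curve {F=0} for the foliation P dt + Q dw on a chart C^2.\<close>
definition invariant_curve2 :: "cfun2 \<Rightarrow> cfun2 \<Rightarrow> cfun2 \<Rightarrow> bool" where
  "invariant_curve2 P Q F \<longleftrightarrow> (\<exists>T. poly2 T \<and> (\<forall>t w.
      P t w * deriv (\<lambda>s. F t s) w - Q t w * deriv (\<lambda>s. F s w) t = F t w * T t w))"

text \<open>Charts of F_k over the base chart t = x1/x0 of the natural fibration:
  (t,z) \<mapsto> [1:t:z] (z = x2/x0^k, isomorphic onto x0\<noteq>0), and
  (t,w) with w = x0^k/x2, i.e. (t,w) \<mapsto> [1:t:1/w] for w \<noteq> 0, E = {w = 0}.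
  A saturated representative of a foliation on a chart given on an open
  dense set U by alpha dt + beta dv is a polynomial form P dt + Q dv with
  finitely many zeros, proportional to alpha dt + beta dv on U.\<close>
definition sat_rep :: "(complex \<times> complex) set \<Rightarrow> cfun2 \<Rightarrow> cfun2 \<Rightarrow> cfun2 \<Rightarrow> cfun2 \<Rightarrow> bool" where
  "sat_rep U \<alpha> \<beta> P Q \<longleftrightarrow> poly2 P \<and> poly2 Q \<and> (\<exists>t v. P t v \<noteq> 0 \<or> Q t v \<noteq> 0) \<and>
     finite {(t, v). P t v = 0 \<and> Q t v = 0} \<and>
     (\<forall>t v. (t, v) \<in> U \<longrightarrow> \<alpha> t v * Q t v = \<beta> t v * P t v)"

definition G_rep_z :: "cfun3 \<Rightarrow> cfun3 \<Rightarrow> cfun2 \<Rightarrow> cfun2 \<Rightarrow> bool" where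
  "G_rep_z A1 A2 P Q \<longleftrightarrow> sat_rep UNIV (\<lambda>t z. A1 1 t z) (\<lambda>t z. A2 1 t z) P Q"

definition G_rep_w :: "cfun3 \<Rightarrow> cfun3 \<Rightarrow> cfun2 \<Rightarrow> cfun2 \<Rightarrow> bool" where
  "G_rep_w A1 A2 P Q \<longleftrightarrow> sat_rep {(t, w). w \<noteq> 0}
      (\<lambda>t w. A1 1 t (1 / w)) (\<lambda>t w. - A2 1 t (1 / w) / w^2) P Q"

text \<open>Riccati: for all fibres {t = c} outside a finite set, G is transverse to
  the fibre at every point of it (the fibre over c is covered by the two charts).\<close>
definition riccati_G :: "cfun3 \<Rightarrow> cfun3 \<Rightarrow> bool" where
  "riccati_G A1 A2 \<longleftrightarrow> (\<exists>P Q P' Q' S. G_rep_z A1 A2 P Q \<and> G_rep_w A1 A2 P' Q' \<and>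
     finite S \<and> (\<forall>c. c \<notin> S \<longrightarrow> (\<forall>z. Q c z \<noteq> 0) \<and> (\<forall>w. Q' c w \<noteq> 0)))"

definition E_invariant :: "cfun3 \<Rightarrow> cfun3 \<Rightarrow> bool" where
  "E_invariant A1 A2 \<longleftrightarrow> (\<exists>P Q. G_rep_w A1 A2 P Q \<and> invariant_curve2 P Q (\<lambda>t w. w))"

end

theory Submission
  imports Defs "HOL-Complex_Analysis.Cauchy_Integral_Formula"
begin

text \<open>
  Expand the coefficients of \<open>\<omega>\<close> in powers of the weighted variable \<open>z = x\<^sub>2\<close>. By
  quasi-homogeneity the part of \<open>A\<^sub>0, A\<^sub>1\<close> at level \<open>z\<^sup>c\<close> is a binary form of degree
  \<open>d - 1 - k c\<close>, so the algebraic multiplicity at \<open>p\<^sub>2\<close> is \<open>r = d - k c\<^sub>m\<^sub>a\<^sub>x\<close>, where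
  \<open>c\<^sub>m\<^sub>a\<^sub>x\<close> is the highest level at which \<open>A\<^sub>0\<close> or \<open>A\<^sub>1\<close> is nonzero; thus \<open>r = d - k\<close>
  means \<open>c\<^sub>m\<^sub>a\<^sub>x = 1\<close>.

  Near \<open>E\<close>, in the coordinates \<open>t = x\<^sub>1/x\<^sub>0, w = x\<^sub>0\<^sup>k/x\<^sub>2\<close>, the pull-back is
  \<open>w\<^sup>2 A\<^sub>1(1,t,1/w) dt - A\<^sub>2(1,t,1/w) dw\<close>. If \<open>c\<^sub>m\<^sub>a\<^sub>x = 1\<close>, Euler's identity forces
  \<open>A\<^sub>2 = h(x\<^sub>0,x\<^sub>1)\<close> and \<open>A\<^sub>1 = a + b z\<close>; the saturated form \<open>(w\<^sup>2 a + w b) dt - h dw\<close>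
  is transverse to every fibre with \<open>h(t) \<noteq> 0\<close> and leaves \<open>w = 0\<close> invariant.
  Conversely, transversality means that \<open>A\<^sub>2(1,t,\<cdot>)\<close> has no zeros for generic \<open>t\<close>, so \<open>A\<^sub>2\<close> does
  not depend on \<open>z\<close>; invariance of \<open>E\<close>, after clearing denominators and letting \<open>w \<rightarrow> 0\<close>,
  kills the top level of \<open>A\<^sub>1\<close> if it exceeds 1, and Euler's identity then does the same for
  \<open>A\<^sub>0\<close>. Finally, \<open>h\<close> has degree \<open>d - k \<ge> 1\<close>, so it vanishes on a line through \<open>p\<^sub>2\<close>, and
  Euler's identity shows that this line is invariant.
\<close>

lemma sum_eq_single_nonzero:
  assumes "finite A" "i \<in> A" "\<And>j. j \<in> A \<Longrightarrow> j \<noteq> i \<Longrightarrow> f j = 0"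
  shows "sum f A = f i"
  using assms by (simp add: sum.remove)

lemma polyfun_no_roots_imp_constant:
  fixes q :: "nat \<Rightarrow> complex"
  assumes "\<And>z. (\<Sum>c\<le>n. q c * z^c) \<noteq> 0" and "1 \<le> c" "c \<le> n"
  shows "q c = 0"
  using fundamental_theorem_of_algebra[of q n] assms by fastforce

lemma polyfun_plus_shift_eq_0:
  fixes u v :: "nat \<Rightarrow> complex"
  assumes "\<And>z. (\<Sum>c\<le>n. u c * z^c) + z * (\<Sum>c\<le>n. v c * z^c) = 0"
  shows "c < n \<Longrightarrow> u (Suc c) + v c = 0" and "v n = 0"
proof -
  define w where "w c = (if c \<le> n then u c else 0) + (if c = 0 then 0 else v (c - 1))" for c
  have "(\<Sum>c\<le>Suc n. w c * z^c) = (\<Sum>c\<le>n. u c * z^c) + z * (\<Sum>c\<le>n. v c * z^c)" for z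
  proof -
    have "(\<Sum>c\<le>Suc n. (if c \<le> n then u c else 0) * z^c) = (\<Sum>c\<le>n. u c * z^c)"
      by (simp add: sum.atMost_Suc)
    moreover have "(\<Sum>c\<le>Suc n. (if c = 0 then 0 else v (c - 1)) * z^c) = z * (\<Sum>c\<le>n. v c * z^c)"
      by (subst sum.atMost_Suc_shift) (simp add: sum_distrib_left mult_ac)
    ultimately show ?thesis
      unfolding w_def distrib_right sum.distrib by simp
  qed
  then have "\<forall>c\<le>Suc n. w c = 0"
    using assms polyfun_eq_0[of w "Suc n"] by simp
  then show "c < n \<Longrightarrow> u (Suc c) + v c = 0" "v n = 0"
    by (auto simp: w_def dest: spec[of _ "Suc c"] spec[of _ "Suc n"])
qed

lemma infinite_zeros_if_finite_nonzeros:
  fixes f :: "complex \<Rightarrow> 'a::zero"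
  assumes "finite {t. f t \<noteq> 0}" shows "infinite {t. f t = 0}"
proof -
  have "infinite (UNIV - {t. f t \<noteq> 0})"
    by (rule Diff_infinite_finite[OF assms infinite_UNIV_char_0])
  moreover have "UNIV - {t. f t \<noteq> 0} = {t. f t = 0}" by auto
  ultimately show ?thesis by simp
qed

lemma ex_not_in_finite_image:
  fixes f :: "complex \<Rightarrow> 'a"
  assumes "finite X" "inj f" shows "\<exists>u. f u \<notin> X"
proof (rule ccontr)
  assume "\<nexists>u. f u \<notin> X"
  then have "range f \<subseteq> X" by blast
  from this assms(1) have "finite (range f)" by (rule finite_subset)
  then have "finite (UNIV :: complex set)" using assms(2) by (rule finite_imageD)
  with infinite_UNIV_char_0 show False ..
qed

lemma polyfun2_eq_0_imp_coeff_eq_0: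
  fixes c :: "nat \<Rightarrow> nat \<Rightarrow> complex"
  assumes zero: "\<And>x y. (\<Sum>i\<le>N. \<Sum>j\<le>N. c i j * x^i * y^j) = 0" and "i \<le> N" "j \<le> N"
  shows "c i j = 0"
proof -
  have "(\<Sum>j\<le>N. (\<Sum>i\<le>N. c i j * x^i) * y^j) = 0" for x y
    using zero[of x y] by (subst (asm) sum.swap) (simp add: sum_distrib_right)
  then have "(\<Sum>i\<le>N. c i j * x^i) = 0" for x
    using \<open>j \<le> N\<close> polyfun_eq_0[of "\<lambda>j. \<Sum>i\<le>N. c i j * x^i" N] by blast
  then show ?thesis
    using \<open>i \<le> N\<close> polyfun_eq_0[of "\<lambda>i. c i j" N] by blast
qed

lemma polyfun2_coeffs_unique:
  fixes c c' :: "nat \<Rightarrow> nat \<Rightarrow> complex"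
  assumes box: "\<And>i j. N < i \<or> N < j \<Longrightarrow> c i j = 0" and box': "\<And>i j. N' < i \<or> N' < j \<Longrightarrow> c' i j = 0"
    and eq: "\<And>x y. (\<Sum>i\<le>N. \<Sum>j\<le>N. c i j * x^i * y^j) = (\<Sum>i\<le>N'. \<Sum>j\<le>N'. c' i j * x^i * y^j)"
  shows "c i j = c' i j"
proof -
  define K where "K = max N N'"
  have extend: "(\<Sum>i\<le>L. \<Sum>j\<le>L. f i j * x^i * y^j) = (\<Sum>i\<le>K. \<Sum>j\<le>K. f i j * x^i * y^j)"
    if "L \<le> K" "\<And>i j. L < i \<or> L < j \<Longrightarrow> f i j = 0" for L and f :: "nat \<Rightarrow> nat \<Rightarrow> complex" and x y
    using that by (intro sum.mono_neutral_cong_left) (auto intro!: sum.mono_neutral_left)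
  have "(\<Sum>i\<le>K. \<Sum>j\<le>K. (c i j - c' i j) * x^i * y^j) = 0" for x y
    using eq[of x y] extend[of N c x y] extend[of N' c' x y] box box'
    by (simp add: K_def left_diff_distrib sum_subtractf)
  then have inside: "i \<le> K \<Longrightarrow> j \<le> K \<Longrightarrow> c i j - c' i j = 0"
    by (rule polyfun2_eq_0_imp_coeff_eq_0)
  show ?thesis
  proof (cases "i \<le> K \<and> j \<le> K")
    case False
    then have "N < i \<or> N < j" "N' < i \<or> N' < j" by (auto simp: K_def)
    then show ?thesis using box box' by simp
  qed (use inside in simp)
qed

lemma continuous_on_UNIV_eq_off_point:
  fixes f :: "'a::perfect_space \<Rightarrow> 'b::t1_space"
  assumes "continuous_on UNIV f" "\<And>w. w \<noteq> a \<Longrightarrow> f w = c"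
  shows "f a = c"
  using continuous_constant_on_closure[of "UNIV - {a}" f c a] assms
  by (auto intro: continuous_on_subset simp: islimpt_in_closure[symmetric] islimpt_UNIV)

section \<open>Polynomial functions of two and three variables\<close>

lemma poly3_sum_monomials:
  fixes w :: "'i \<Rightarrow> complex" and ea eb ec :: "'i \<Rightarrow> nat"
  assumes S: "finite S"
  shows "poly3 (\<lambda>x y z. \<Sum>s\<in>S. w s * x^ea s * y^eb s * z^ec s)"
proof -
  define N where "N = Max (insert 0 (ea ` S \<union> eb ` S \<union> ec ` S))"
  have bounded: "ea s \<le> N \<and> eb s \<le> N \<and> ec s \<le> N" if "s \<in> S" for s
    unfolding N_def using S that by (auto intro: Max_ge)
  define c where "c a b e = (\<Sum>s | s \<in> S \<and> (ea s, eb s, ec s) = (a, b, e). w s)" for a b e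
  define B where "B = {..N} \<times> {..N} \<times> {..N}"
  show ?thesis unfolding poly3_def
  proof (intro exI allI)
    fix x y z :: complex
    have "(\<Sum>s\<in>S. w s * x^ea s * y^eb s * z^ec s)
        = (\<Sum>p\<in>B. \<Sum>s | s \<in> S \<and> (ea s, eb s, ec s) = p. w s * x^ea s * y^eb s * z^ec s)"
      by (rule sum.group[symmetric]) (use S bounded in \<open>auto simp: B_def\<close>)
    also have "\<dots> = (\<Sum>(a, b, e)\<in>B. c a b e * x^a * y^b * z^e)"
      by (rule sum.cong) (auto simp: c_def sum_distrib_right intro!: sum.cong)
    also have "\<dots> = (\<Sum>a\<le>N. \<Sum>b\<le>N. \<Sum>e\<le>N. c a b e * x^a * y^b * z^e)"
      unfolding B_def sum.cartesian_product' by simp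
    finally show "(\<Sum>s\<in>S. w s * x^ea s * y^eb s * z^ec s)
        = (\<Sum>a\<le>N. \<Sum>b\<le>N. \<Sum>e\<le>N. c a b e * x^a * y^b * z^e)" .
  qed
qed

lemma poly3_as_monomial_sum:
  assumes "poly3 F"
  obtains S :: "(nat \<times> nat \<times> nat) set" and w ea eb ec where "finite S"
    "\<And>x y z. F x y z = (\<Sum>s\<in>S. w s * x^ea s * y^eb s * z^ec s)"
proof -
  obtain c N where "\<And>x y z. F x y z = (\<Sum>a\<le>N. \<Sum>b\<le>N. \<Sum>e\<le>N. c a b e * x^a * y^b * z^e)"
    using assms unfolding poly3_def by blast
  then show ?thesis
    by (intro that[of "{..N} \<times> {..N} \<times> {..N}" "\<lambda>(a, b, e). c a b e" fst "fst \<circ> snd" "snd \<circ> snd"])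
       (simp_all add: sum.cartesian_product')
qed

lemma poly3_add: "poly3 F \<Longrightarrow> poly3 G \<Longrightarrow> poly3 (\<lambda>x y z. F x y z + G x y z)"
proof -
  assume "poly3 F" "poly3 G"
  then obtain S1 :: "(nat \<times> nat \<times> nat) set" and w1 a1 b1 e1
      and S2 :: "(nat \<times> nat \<times> nat) set" and w2 a2 b2 e2
    where S: "finite S1" "finite S2"
      and F: "\<And>x y z. F x y z = (\<Sum>s\<in>S1. w1 s * x^a1 s * y^b1 s * z^e1 s)"
      and G: "\<And>x y z. G x y z = (\<Sum>s\<in>S2. w2 s * x^a2 s * y^b2 s * z^e2 s)"
    by (elim poly3_as_monomial_sum) blast
  have "poly3 (\<lambda>x y z. \<Sum>s\<in>S1 <+> S2.
      case_sum w1 w2 s * x^case_sum a1 a2 s * y^case_sum b1 b2 s * z^case_sum e1 e2 s)"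
    using S by (intro poly3_sum_monomials) simp
  then show ?thesis by (simp add: sum.Plus S F G o_def)
qed

lemma poly3_mult: "poly3 F \<Longrightarrow> poly3 G \<Longrightarrow> poly3 (\<lambda>x y z. F x y z * G x y z)"
proof -
  assume "poly3 F" "poly3 G"
  then obtain S1 :: "(nat \<times> nat \<times> nat) set" and w1 a1 b1 e1
      and S2 :: "(nat \<times> nat \<times> nat) set" and w2 a2 b2 e2
    where S: "finite S1" "finite S2"
      and F: "\<And>x y z. F x y z = (\<Sum>s\<in>S1. w1 s * x^a1 s * y^b1 s * z^e1 s)"
      and G: "\<And>x y z. G x y z = (\<Sum>s\<in>S2. w2 s * x^a2 s * y^b2 s * z^e2 s)"
    by (elim poly3_as_monomial_sum) blast
  have "poly3 (\<lambda>x y z. \<Sum>(p, q)\<in>S1 \<times> S2. (w1 p * w2 q) * x^(a1 p + a2 q) * y^(b1 p + b2 q)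
                                              * z^(e1 p + e2 q))"
    using poly3_sum_monomials[of "S1 \<times> S2" "\<lambda>(p, q). w1 p * w2 q" "\<lambda>(p, q). a1 p + a2 q"
        "\<lambda>(p, q). b1 p + b2 q" "\<lambda>(p, q). e1 p + e2 q"] S
    by (simp add: case_prod_unfold)
  moreover have "(\<Sum>(p, q)\<in>S1 \<times> S2. (w1 p * w2 q) * x^(a1 p + a2 q) * y^(b1 p + b2 q)
                                     * z^(e1 p + e2 q)) = F x y z * G x y z" for x y z
    unfolding F G sum_product sum.cartesian_product
    by (intro sum.cong refl) (simp add: power_add algebra_simps)
  ultimately show ?thesis by simp
qed

lemma poly3_const: "poly3 (\<lambda>x y z. c)"
  using poly3_sum_monomials[of "{()}" "\<lambda>_. c" "\<lambda>_. 0" "\<lambda>_. 0" "\<lambda>_. 0"] by simp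

lemma poly3_x: "poly3 (\<lambda>x y z. x)"
  using poly3_sum_monomials[of "{()}" "\<lambda>_. 1" "\<lambda>_. 1" "\<lambda>_. 0" "\<lambda>_. 0"] by simp

lemma poly3_y: "poly3 (\<lambda>x y z. y)"
  using poly3_sum_monomials[of "{()}" "\<lambda>_. 1" "\<lambda>_. 0" "\<lambda>_. 1" "\<lambda>_. 0"] by simp

lemma poly3_z: "poly3 (\<lambda>x y z. z)"
  using poly3_sum_monomials[of "{()}" "\<lambda>_. 1" "\<lambda>_. 0" "\<lambda>_. 0" "\<lambda>_. 1"] by simp

lemma poly3_sum:
  "finite I \<Longrightarrow> (\<And>i. i \<in> I \<Longrightarrow> poly3 (F i)) \<Longrightarrow> poly3 (\<lambda>x y z. \<Sum>i\<in>I. F i x y z)"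
  by (induction I rule: finite_induct) (auto intro: poly3_add poly3_const)

lemma poly3_power: "poly3 F \<Longrightarrow> poly3 (\<lambda>x y z. F x y z ^ n)"
  by (induction n) (auto intro: poly3_mult poly3_const)

lemma poly3_uminus: "poly3 F \<Longrightarrow> poly3 (\<lambda>x y z. - F x y z)"
  using poly3_mult[OF poly3_const, of F "-1"] by simp

lemma poly3_diff: "poly3 F \<Longrightarrow> poly3 G \<Longrightarrow> poly3 (\<lambda>x y z. F x y z - G x y z)"
  using poly3_add[OF _ poly3_uminus, of F G] by simp

lemmas poly3_intros =
  poly3_add poly3_mult poly3_const poly3_x poly3_y poly3_z poly3_sum poly3_power poly3_uminus
  poly3_diff

lemma poly2_iff_poly3: "poly2 f \<longleftrightarrow> poly3 (\<lambda>x y z. f x y)"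
proof
  assume "poly2 f"
  then obtain c N where "\<And>x y. f x y = (\<Sum>a\<le>N. \<Sum>b\<le>N. c a b * x^a * y^b)"
    unfolding poly2_def by blast
  then show "poly3 (\<lambda>x y z. f x y)"
    by (simp only:) (intro poly3_intros finite_atMost)
next
  assume "poly3 (\<lambda>x y z. f x y)"
  then obtain c N
    where f: "\<And>x y z. f x y = (\<Sum>a\<le>N. \<Sum>b\<le>N. \<Sum>e\<le>N. c a b e * x^a * y^b * z^e)"
    unfolding poly3_def by blast
  have "f x y = (\<Sum>a\<le>N. \<Sum>b\<le>N. c a b 0 * x^a * y^b)" for x y
    using f[of x y 0] by (simp add: power_0_left mult_ac if_distrib sum.delta cong: if_cong)
  then show "poly2 f"
    unfolding poly2_def by (intro exI[of _ "\<lambda>a b. c a b 0"] exI[of _ N]) blast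
qed

lemma poly2_add: "poly2 f \<Longrightarrow> poly2 g \<Longrightarrow> poly2 (\<lambda>x y. f x y + g x y)"
  unfolding poly2_iff_poly3 by (rule poly3_add)

lemma poly2_mult: "poly2 f \<Longrightarrow> poly2 g \<Longrightarrow> poly2 (\<lambda>x y. f x y * g x y)"
  unfolding poly2_iff_poly3 by (rule poly3_mult)

lemma poly2_const: "poly2 (\<lambda>x y. c)"
  unfolding poly2_iff_poly3 by (rule poly3_const)

lemma poly2_x: "poly2 (\<lambda>x y. x)"
  unfolding poly2_iff_poly3 by (rule poly3_x)

lemma poly2_y: "poly2 (\<lambda>x y. y)"
  unfolding poly2_iff_poly3 by (rule poly3_y)

lemma poly2_sum:
  "finite I \<Longrightarrow> (\<And>i. i \<in> I \<Longrightarrow> poly2 (f i)) \<Longrightarrow> poly2 (\<lambda>x y. \<Sum>i\<in>I. f i x y)"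
  unfolding poly2_iff_poly3 by (rule poly3_sum)

lemma poly2_power: "poly2 f \<Longrightarrow> poly2 (\<lambda>x y. f x y ^ n)"
  unfolding poly2_iff_poly3 by (rule poly3_power)

lemma poly2_uminus: "poly2 f \<Longrightarrow> poly2 (\<lambda>x y. - f x y)"
  unfolding poly2_iff_poly3 by (rule poly3_uminus)

lemmas poly2_intros =
  poly2_add poly2_mult poly2_const poly2_x poly2_y poly2_sum poly2_power poly2_uminus

lemma poly3_continuous_on_compose:
  assumes "poly3 F" "continuous_on S f" "continuous_on S g" "continuous_on S h"
  shows "continuous_on S (\<lambda>u. F (f u) (g u) (h u))"
proof -
  obtain c N where "\<And>x y z. F x y z = (\<Sum>a\<le>N. \<Sum>b\<le>N. \<Sum>e\<le>N. c a b e * x^a * y^b * z^e)"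
    using assms(1) unfolding poly3_def by blast
  then show ?thesis by (simp only:) (intro continuous_intros assms(2-))
qed

lemma poly2_continuous_on_second: "poly2 f \<Longrightarrow> continuous_on UNIV (f t)"
  unfolding poly2_iff_poly3
  by (drule poly3_continuous_on_compose[of _ UNIV "\<lambda>_. t" id "\<lambda>_. 0"]) (auto intro: continuous_intros)

lemma poly3_swap_xy:
  assumes "poly3 F" shows "poly3 (\<lambda>x y z. F y x z)"
proof -
  obtain S :: "(nat \<times> nat \<times> nat) set" and w ea eb ec where S: "finite S"
    and F: "\<And>x y z. F x y z = (\<Sum>s\<in>S. w s * x^ea s * y^eb s * z^ec s)"
    using poly3_as_monomial_sum[OF assms] by blast
  have "F y x z = (\<Sum>s\<in>S. w s * x^eb s * y^ea s * z^ec s)" for x y z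
    unfolding F by (simp add: ac_simps)
  then show ?thesis
    using poly3_sum_monomials[OF S, of w eb ea ec] by simp
qed

lemma poly3_split_line:
  assumes "poly3 F"
  obtains G where "poly3 G" "\<And>x y z. F x y z = F x (t * x) z + (y - t * x) * G x y z"
proof -
  obtain S :: "(nat \<times> nat \<times> nat) set" and w ea eb ec where S: "finite S"
    and F: "\<And>x y z. F x y z = (\<Sum>s\<in>S. w s * x^ea s * y^eb s * z^ec s)"
    using poly3_as_monomial_sum[OF assms] by blast
  define G where
    "G x y z = (\<Sum>s\<in>S. w s * x^ea s * z^ec s * (\<Sum>i<eb s. (t * x)^(eb s - Suc i) * y^i))"
    for x y z
  have "poly3 G"
    unfolding G_def using S by (intro poly3_intros finite_lessThan)
  moreover have "F x y z - F x (t * x) z = (y - t * x) * G x y z" for x y z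
  proof -
    have "w s * x^ea s * y^eb s * z^ec s - w s * x^ea s * (t * x)^eb s * z^ec s
        = w s * x^ea s * z^ec s * (y^eb s - (t * x)^eb s)" for s
      by (simp add: algebra_simps)
    also have "\<dots> s = (y - t * x) * (w s * x^ea s * z^ec s
                          * (\<Sum>i<eb s. (t * x)^(eb s - Suc i) * y^i))" for s
      by (simp only: power_diff_sumr2 mult_ac)
    finally show ?thesis
      unfolding F G_def sum_subtractf[symmetric] sum_distrib_left by simp
  qed
  ultimately show ?thesis
    by (intro that[of G]) (simp_all add: algebra_simps)
qed

lemma poly3_divisible_by_linear_form:
  assumes "poly3 F" and "(\<alpha>, \<beta>) \<noteq> (0, 0)"
    and vanish: "\<And>x y z. \<alpha> * x + \<beta> * y = 0 \<Longrightarrow> F x y z = 0"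
  obtains G where "poly3 G" "\<And>x y z. F x y z = (\<alpha> * x + \<beta> * y) * G x y z"
proof (cases "\<beta> = 0")
  case True
  with assms(2) have "\<alpha> \<noteq> 0" by simp
  obtain G where G: "poly3 G" "\<And>x y z. F y x z = F (0 * x) x z + (y - 0 * x) * G x y z"
    using poly3_split_line[OF poly3_swap_xy[OF assms(1)]] by blast
  show ?thesis
  proof (rule that[of "\<lambda>x y z. inverse \<alpha> * G y x z"])
    show "poly3 (\<lambda>x y z. inverse \<alpha> * G y x z)"
      by (intro poly3_mult poly3_const poly3_swap_xy[OF G(1)])
    show "F x y z = (\<alpha> * x + \<beta> * y) * (inverse \<alpha> * G y x z)" for x y z
      using G(2)[where x = y and y = x] vanish[of 0 y z] True \<open>\<alpha> \<noteq> 0\<close> by simp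
  qed
next
  case False
  obtain G where G: "poly3 G"
    "\<And>x y z. F x y z = F x (- \<alpha> / \<beta> * x) z + (y - - \<alpha> / \<beta> * x) * G x y z"
    using poly3_split_line[OF assms(1)] by blast
  show ?thesis
  proof (rule that[of "\<lambda>x y z. inverse \<beta> * G x y z"])
    show "poly3 (\<lambda>x y z. inverse \<beta> * G x y z)"
      by (intro poly3_intros G(1))
    show "F x y z = (\<alpha> * x + \<beta> * y) * (inverse \<beta> * G x y z)" for x y z
      using G(2)[of x y z] vanish[of x "- \<alpha> / \<beta> * x" z] False
      by (simp add: field_simps)
  qed
qed

section \<open>Expansion in powers of the weighted variable\<close>

definition level :: "nat \<Rightarrow> (nat \<Rightarrow> nat \<Rightarrow> nat \<Rightarrow> complex) \<Rightarrow> nat \<Rightarrow> complex \<Rightarrow> complex \<Rightarrow> complex"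
  where "level M C c x y = (\<Sum>a\<le>M. \<Sum>b\<le>M. C a b c * x^a * y^b)"

lemma level_chart: "level M C c 1 t = (\<Sum>b\<le>M. (\<Sum>a\<le>M. C a b c) * t^b)"
  unfolding level_def by (subst sum.swap) (simp add: sum_distrib_right)

lemma level_chart_finite_roots:
  assumes "level M C c 1 t0 \<noteq> 0"
  shows "finite {t. level M C c 1 t = 0}"
proof -
  have "\<exists>b\<le>M. (\<Sum>a\<le>M. C a b c) \<noteq> 0"
  proof (rule ccontr)
    assume "\<not> (\<exists>b\<le>M. (\<Sum>a\<le>M. C a b c) \<noteq> 0)"
    then have "level M C c 1 t0 = 0"
      unfolding level_chart by (intro sum.neutral) simp
    with assms show False ..
  qed
  then show ?thesis
    unfolding level_chart by (simp only: polyfun_finite_roots)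
qed

lemma level_homogeneous:
  assumes "\<And>a b. C a b c \<noteq> 0 \<Longrightarrow> a + b = n"
  shows "level M C c (u * x) (u * y) = u^n * level M C c x y"
  unfolding level_def sum_distrib_left
proof (intro sum.cong refl)
  fix a b
  show "C a b c * (u * x)^a * (u * y)^b = u^n * (C a b c * x^a * y^b)"
    using assms[of a b] by (cases "C a b c = 0") (auto simp: power_mult_distrib power_add)
qed

lemma level_vanishes_on_line:
  assumes support: "\<And>a b. C a b c \<noteq> 0 \<Longrightarrow> a + b = n" and "1 \<le> n" "n \<le> M"
  obtains \<alpha> \<beta> where "(\<alpha>, \<beta>) \<noteq> (0, 0)" "\<And>x y. \<alpha> * x + \<beta> * y = 0 \<Longrightarrow> level M C c x y = 0"
proof (cases "C 0 n c = 0")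
  case True
  have "level M C c 0 y = 0" for y
    unfolding level_def using True support[of 0] by (auto simp: power_0_left intro!: sum.neutral)
  then show ?thesis
    by (intro that[of 1 0]) auto
next
  case False
  have "(\<Sum>a\<le>M. C a n c) = C 0 n c"
  proof (rule sum_eq_single_nonzero)
    show "C j n c = 0" if "j \<noteq> 0" for j
      using support[of j n] that by (cases "C j n c = 0") auto
  qed simp_all
  then obtain t where root: "level M C c 1 t = 0"
    using fundamental_theorem_of_algebra[of "\<lambda>b. \<Sum>a\<le>M. C a b c" M] False assms(2,3)
    unfolding level_chart by fastforce
  have "level M C c x (t * x) = 0" for x
    using level_homogeneous[OF support, where M = M and u = x and x = 1 and y = t] root by (simp add: mult.commute)
  then show ?thesis
    by (intro that[of "- t" 1]) (auto simp: algebra_simps)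
qed

lemma poly2_level_chart: "poly2 (\<lambda>t w. level M C c 1 t)"
  unfolding level_def by (intro poly2_intros finite_atMost)

lemma poly3_level_expansion: "poly3 (\<lambda>x y z. \<Sum>c\<le>M. level M C c x y * z^c)"
  unfolding level_def by (intro poly3_intros finite_atMost)

lemma sum_levels: "(\<Sum>c\<le>M. level M C c x y) = (\<Sum>a\<le>M. \<Sum>b\<le>M. (\<Sum>c\<le>M. C a b c) * x^a * y^b)"
  unfolding level_def sum_distrib_right by (subst sum.swap, subst (2) sum.swap) (rule refl)

lemma qhom_expansion:
  assumes "qhom k e A" "1 \<le> k" "e \<le> int M"
  obtains C where "\<And>a b c. C a b c \<noteq> 0 \<Longrightarrow> int a + int b + int k * int c = e"
    "\<And>x y z. A x y z = (\<Sum>c\<le>M. level M C c x y * z^c)"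
proof -
  let ?T = "{(a, b, c). int a + int b + int k * int c = e}"
  let ?B = "{..M} \<times> {..M} \<times> {..M}"
  obtain coef where A: "\<And>x y z. A x y z = (\<Sum>(a, b, c)\<in>?T. coef a b c * x^a * y^b * z^c)"
    using assms(1) unfolding qhom_def by blast
  define C where "C a b c = (if int a + int b + int k * int c = e then coef a b c else 0)" for a b c
  have "a \<le> M \<and> b \<le> M \<and> c \<le> M" if "int a + int b + int k * int c = e" for a b c
  proof -
    have "int c \<le> int k * int c" using assms(2) by (simp add: mult_le_cancel_right1)
    then show ?thesis using that assms(3) by linarith
  qed
  then have "?T \<subseteq> ?B" by auto
  have "A x y z = (\<Sum>c\<le>M. level M C c x y * z^c)" for x y z
  proof -
    have "A x y z = (\<Sum>(a, b, c)\<in>?T. C a b c * x^a * y^b * z^c)"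
      unfolding A by (rule sum.cong) (auto simp: C_def)
    also have "\<dots> = (\<Sum>(a, b, c)\<in>?B. C a b c * x^a * y^b * z^c)"
      by (rule sum.mono_neutral_left) (use \<open>?T \<subseteq> ?B\<close> in \<open>auto simp: C_def split: if_splits\<close>)
    also have "\<dots> = (\<Sum>a\<le>M. \<Sum>b\<le>M. \<Sum>c\<le>M. C a b c * x^a * y^b * z^c)"
      by (simp add: sum.cartesian_product')
    also have "\<dots> = (\<Sum>c\<le>M. \<Sum>a\<le>M. \<Sum>b\<le>M. C a b c * x^a * y^b * z^c)"
      by (subst sum.swap, subst (2) sum.swap) (rule refl)
    also have "\<dots> = (\<Sum>c\<le>M. level M C c x y * z^c)"
      by (simp add: level_def sum_distrib_right)
    finally show ?thesis .
  qed
  moreover have "C a b c \<noteq> 0 \<Longrightarrow> int a + int b + int k * int c = e" for a b c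
    by (simp add: C_def split: if_splits)
  ultimately show ?thesis
    using that by blast
qed

locale weighted_coeffs =
  fixes k :: nat and e :: int and M :: nat and C :: "nat \<Rightarrow> nat \<Rightarrow> nat \<Rightarrow> complex"
  assumes k_pos: "1 \<le> k" and degree_le: "e \<le> int M"
    and support: "\<And>a b c. C a b c \<noteq> 0 \<Longrightarrow> int a + int b + int k * int c = e"
begin

lemma coeff_bounded:
  assumes "C a b c \<noteq> 0" shows "a \<le> M" "b \<le> M" "c \<le> M"
proof -
  have "int c \<le> int k * int c" using k_pos by (simp add: mult_le_cancel_right1)
  then show "a \<le> M" "b \<le> M" "c \<le> M" using support[OF assms] degree_le by linarith+
qed

lemma level_above: "M < c \<Longrightarrow> level M C c x y = 0"
  unfolding level_def using coeff_bounded(3) by (force intro!: sum.neutral)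

lemma level_unique:
  assumes "C a b c \<noteq> 0" "C a b c' \<noteq> 0" shows "c = c'"
proof -
  have "int k * int c = int k * int c'"
    using support[OF assms(1)] support[OF assms(2)] by linarith
  then show ?thesis using k_pos by simp
qed

lemma sum_levels_eq_0_iff: "(\<Sum>c\<le>M. C a b c) = 0 \<longleftrightarrow> (\<forall>c. C a b c = 0)"
proof -
  have single: "(\<Sum>c'\<le>M. C a b c') = C a b c" if "C a b c \<noteq> 0" for c
    by (rule sum_eq_single_nonzero) (use that coeff_bounded level_unique in blast)+
  show ?thesis
  proof
    assume "(\<Sum>c\<le>M. C a b c) = 0"
    then show "\<forall>c. C a b c = 0" using single by fastforce
  qed simp
qed

lemma coeff_eq_0_if_level_chart_eq_0:
  assumes "\<And>t. level M C c 1 t = 0" shows "C a b c = 0"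
proof (rule ccontr)
  assume nz: "C a b c \<noteq> 0"
  have "(\<Sum>a'\<le>M. C a' b c) = C a b c"
  proof (rule sum_eq_single_nonzero)
    show "C a' b c = 0" if "a' \<noteq> a" for a'
      using support[OF nz] that by (cases "C a' b c = 0") (auto dest: support)
  qed (use coeff_bounded(1)[OF nz] in auto)
  moreover have "\<forall>b'\<le>M. (\<Sum>a'\<le>M. C a' b' c) = 0"
    using assms unfolding level_chart polyfun_eq_0[symmetric] by blast
  ultimately show False
    using nz coeff_bounded(2)[OF nz] by simp
qed

lemma coeff_eq_0_if_infinite_chart_roots:
  "infinite {t. level M C c 1 t = 0} \<Longrightarrow> C a b c = 0"
  using level_chart_finite_roots coeff_eq_0_if_level_chart_eq_0 by blast

lemma chart_coeffs_eq_sum_levels: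
  assumes A: "\<And>x y z. A x y z = (\<Sum>c\<le>M. level M C c x y * z^c)"
    and box: "\<And>i j. N < i \<or> N < j \<Longrightarrow> c' i j = 0"
    and chart: "\<And>x y. A x y 1 = (\<Sum>i\<le>N. \<Sum>j\<le>N. c' i j * x^i * y^j)"
  shows "c' i j = (\<Sum>c\<le>M. C i j c)"
proof (rule polyfun2_coeffs_unique[where c = c' and c' = "\<lambda>i j. \<Sum>c\<le>M. C i j c" and N = N and N' = M])
  show "(\<Sum>c\<le>M. C i j c) = 0" if "M < i \<or> M < j" for i j
    using that coeff_bounded(1,2) by (force intro!: sum.neutral)
  show "(\<Sum>i\<le>N. \<Sum>j\<le>N. c' i j * x^i * y^j) = (\<Sum>i\<le>M. \<Sum>j\<le>M. (\<Sum>c\<le>M. C i j c) * x^i * y^j)"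
    for x y
    using chart[of x y] by (simp add: A sum_levels)
qed (rule box)

end

section \<open>Invariant lines, Riccati foliations and invariance of E\<close>

lemma saturated_fol_chart_zeros_finite:
  assumes sat: "saturated_fol k A0 A1 A2"
    and euler: "\<And>x y z. x * A0 x y z + y * A1 x y z + of_nat k * z * A2 x y z = 0"
  shows "finite {(t, z). A1 1 t z = 0 \<and> A2 1 t z = 0}"
proof -
  obtain F :: "(complex \<times> complex \<times> complex) set" where F: "finite F" and
    orbits: "\<forall>x0 x1 x2. (x0, x1, x2) \<noteq> (0, 0, 0) \<and> A0 x0 x1 x2 = 0 \<and> A1 x0 x1 x2 = 0
      \<and> A2 x0 x1 x2 = 0
      \<longrightarrow> (\<exists>(p0, p1, p2) \<in> F. \<exists>u. u \<noteq> 0 \<and> x0 = u * p0 \<and> x1 = u * p1 \<and> x2 = u^k * p2)"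
    using sat unfolding saturated_fol_def by blast
  have "{(t, z). A1 1 t z = 0 \<and> A2 1 t z = 0} \<subseteq> (\<lambda>(p0, p1, p2). (p1 / p0, p2 / p0^k)) ` F"
  proof clarify
    fix t z assume zero: "A1 1 t z = 0" "A2 1 t z = 0"
    then have "A0 1 t z = 0" using euler[of 1 t z] by simp
    then obtain p0 p1 p2 u where p: "(p0, p1, p2) \<in> F" "u \<noteq> 0" "1 = u * p0" "t = u * p1" "z = u^k * p2"
      using orbits[rule_format, of 1 t z] zero by fastforce
    have p0: "p0 = 1 / u"
      using p(2) p(3)[symmetric] by (simp add: field_simps)
    have "(t, z) = (p1 / p0, p2 / p0^k)"
      using p(4,5) unfolding p0 by (simp add: power_one_over)
    with p(1) show "(t, z) \<in> (\<lambda>(p0, p1, p2). (p1 / p0, p2 / p0^k)) ` F" by force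
  qed
  then show ?thesis using F finite_subset by blast
qed

lemma pd3_linear_form:
  "pd3 0 (\<lambda>x0 x1 x2. \<alpha> * x0 + \<beta> * x1) x0 x1 x2 = \<alpha>"
  "pd3 1 (\<lambda>x0 x1 x2. \<alpha> * x0 + \<beta> * x1) x0 x1 x2 = \<beta>"
  "pd3 2 (\<lambda>x0 x1 x2. \<alpha> * x0 + \<beta> * x1) x0 x1 x2 = 0"
  by (auto simp: pd3_def intro!: DERIV_imp_deriv derivative_eq_intros)

lemma linear_form_nonzero:
  assumes "(\<alpha>, \<beta>) \<noteq> (0, 0)" shows "\<exists>x y. \<alpha> * x + \<beta> * y \<noteq> (0::complex)"
proof (cases "\<alpha> = 0")
  case True
  with assms have "\<alpha> * 0 + \<beta> * 1 \<noteq> 0" by simp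
  then show ?thesis by blast
next
  case False
  then have "\<alpha> * 1 + \<beta> * 0 \<noteq> 0" by simp
  then show ?thesis by blast
qed

lemma euler_imp_tangential_component_vanishes:
  assumes poly: "poly3 A0" "poly3 A1"
    and euler: "\<And>x y z. x * A0 x y z + y * A1 x y z + \<kappa> * z * A2 x y z = 0"
    and line: "(\<alpha>, \<beta>) \<noteq> (0, 0)"
    and vanish: "\<And>x y z. \<alpha> * x + \<beta> * y = 0 \<Longrightarrow> A2 x y z = 0"
    and on_line: "\<alpha> * x + \<beta> * y = 0"
  shows "\<beta> * A0 x y z - \<alpha> * A1 x y z = 0"
proof -
  define H where "H x y z = \<beta> * A0 x y z - \<alpha> * A1 x y z" for x y z
  have "poly3 H" unfolding H_def by (intro poly3_intros poly)
  \<comment> \<open>Along \<open>(x, y) = u (\<beta>, -\<alpha>)\<close> Euler's identity reads \<open>u H = 0\<close>.\<close>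
  have off0: "H (\<beta> * u) (- \<alpha> * u) z = 0" if "u \<noteq> 0" for u
  proof -
    have "u * H (\<beta> * u) (- \<alpha> * u) z = - \<kappa> * z * A2 (\<beta> * u) (- \<alpha> * u) z"
      using euler[of "\<beta> * u" "- \<alpha> * u" z] unfolding H_def by (simp add: algebra_simps)
    also have "A2 (\<beta> * u) (- \<alpha> * u) z = 0" by (rule vanish) (simp add: algebra_simps)
    finally show ?thesis using that by simp
  qed
  have "continuous_on UNIV (\<lambda>u. H (\<beta> * u) (- \<alpha> * u) z)"
    by (rule poly3_continuous_on_compose[OF \<open>poly3 H\<close>]) (intro continuous_intros)+
  then have on_param: "H (\<beta> * u) (- \<alpha> * u) z = 0" for u
    using continuous_on_UNIV_eq_off_point[of "\<lambda>u. H (\<beta> * u) (- \<alpha> * u) z" 0 0] off0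
    by (cases "u = 0") auto
  obtain u where "x = \<beta> * u" "y = - \<alpha> * u"
  proof (cases "\<beta> = 0")
    case True
    have "\<alpha> \<noteq> 0" using line True by simp
    moreover have "x = 0" using on_line True \<open>\<alpha> \<noteq> 0\<close> by simp
    ultimately show ?thesis using True by (intro that[of "- y / \<alpha>"]) simp_all
  next
    case False
    have "\<beta> * y = - \<alpha> * x" using on_line by (simp add: eq_neg_iff_add_eq_0 add.commute)
    then have "y = - \<alpha> * (x / \<beta>)" using False by (simp add: field_simps)
    then show ?thesis using False by (intro that[of "x / \<beta>"]) simp_all
  qed
  then show ?thesis using on_param unfolding H_def by simp
qed

lemma invariant_line_if_A2_vanishes_on_line:
  assumes poly: "poly3 A0" "poly3 A1" "poly3 A2"
    and euler: "\<And>x y z. x * A0 x y z + y * A1 x y z + \<kappa> * z * A2 x y z = 0"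
    and line: "(\<alpha>, \<beta>) \<noteq> (0, 0)"
    and vanish: "\<And>x y z. \<alpha> * x + \<beta> * y = 0 \<Longrightarrow> A2 x y z = 0"
  shows "invariant_curve A0 A1 A2 (\<lambda>x0 x1 x2. \<alpha> * x0 + \<beta> * x1)"
proof -
  have "poly3 (\<lambda>x y z. \<beta> * A0 x y z - \<alpha> * A1 x y z)"
    by (intro poly3_intros poly(1,2))
  moreover have "\<beta> * A0 x y z - \<alpha> * A1 x y z = 0" if "\<alpha> * x + \<beta> * y = 0" for x y z
    using euler_imp_tangential_component_vanishes[OF poly(1,2) euler line vanish that] .
  ultimately obtain G01 where G01: "poly3 G01"
    "\<And>x y z. \<beta> * A0 x y z - \<alpha> * A1 x y z = (\<alpha> * x + \<beta> * y) * G01 x y z"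
    using poly3_divisible_by_linear_form[OF _ line] by blast
  obtain G2 where G2: "poly3 G2" "\<And>x y z. A2 x y z = (\<alpha> * x + \<beta> * y) * G2 x y z"
    using poly3_divisible_by_linear_form[OF poly(3) line vanish] by blast
  show ?thesis
    unfolding invariant_curve_def pd3_linear_form
  proof (intro conjI)
    show "poly3 (\<lambda>x0 x1 x2. \<alpha> * x0 + \<beta> * x1)"
      by (intro poly3_intros)
    show "\<exists>x y z. \<alpha> * x + \<beta> * y \<noteq> 0"
      using linear_form_nonzero[OF line] by blast
    show "\<exists>T01 T02 T12. poly3 T01 \<and> poly3 T02 \<and> poly3 T12 \<and> (\<forall>x y z.
        A0 x y z * \<beta> - A1 x y z * \<alpha> = (\<alpha> * x + \<beta> * y) * T01 x y z \<and>
        A0 x y z * 0 - A2 x y z * \<alpha> = (\<alpha> * x + \<beta> * y) * T02 x y z \<and>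
        A1 x y z * 0 - A2 x y z * \<beta> = (\<alpha> * x + \<beta> * y) * T12 x y z)"
    proof (rule exI[of _ G01], rule exI[of _ "\<lambda>x y z. - \<alpha> * G2 x y z"],
        rule exI[of _ "\<lambda>x y z. - \<beta> * G2 x y z"], intro conjI allI)
      show "poly3 (\<lambda>x y z. - \<alpha> * G2 x y z)" "poly3 (\<lambda>x y z. - \<beta> * G2 x y z)"
        by (intro poly3_mult poly3_const G2(1))+
      fix x y z
      show "A0 x y z * \<beta> - A1 x y z * \<alpha> = (\<alpha> * x + \<beta> * y) * G01 x y z"
        using G01(2)[of x y z] by (simp add: mult.commute)
      show "A0 x y z * 0 - A2 x y z * \<alpha> = (\<alpha> * x + \<beta> * y) * (- \<alpha> * G2 x y z)"
        "A1 x y z * 0 - A2 x y z * \<beta> = (\<alpha> * x + \<beta> * y) * (- \<beta> * G2 x y z)"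
        using G2(2)[of x y z] by (simp_all add: algebra_simps)
    qed (rule G01(1))
  qed
qed

lemma G_rep_w_if_affine:
  assumes A1: "\<And>t z. A1 1 t z = a t + b t * z" and A2: "\<And>t z. A2 1 t z = h t"
    and poly: "poly2 (\<lambda>t w. a t)" "poly2 (\<lambda>t w. b t)" "poly2 (\<lambda>t w. h t)"
    and roots: "finite {t. h t = 0}"
    and zeros: "finite {(t, z). A1 1 t z = 0 \<and> A2 1 t z = 0}"
  shows "G_rep_w A1 A2 (\<lambda>t w. w^2 * a t + w * b t) (\<lambda>t w. - h t)"
proof -
  have ab: "a t \<noteq> 0 \<or> b t \<noteq> 0" if "h t = 0" for t
  proof -
    obtain z where "(t, z) \<notin> {(t, z). A1 1 t z = 0 \<and> A2 1 t z = 0}"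
      using ex_not_in_finite_image[OF zeros, of "Pair t"] by (auto simp: inj_on_def)
    with that show ?thesis by (auto simp: A1 A2)
  qed
  have "(t, w) \<in> Sigma {t. h t = 0} (\<lambda>t. {0, - b t / a t})"
    if "w^2 * a t + w * b t = 0" "- h t = 0" for t w
  proof -
    from that have h: "h t = 0" and "w * (w * a t + b t) = 0"
      by (simp_all add: power2_eq_square algebra_simps)
    then have "w = 0 \<or> w * a t + b t = 0" by simp
    moreover have "w = - b t / a t" if "w * a t + b t = 0"
      using that ab[OF h] by (cases "a t = 0") (simp_all add: field_simps add_eq_0_iff)
    ultimately show ?thesis using h by auto
  qed
  then have "{(t, w). w^2 * a t + w * b t = 0 \<and> - h t = 0}
      \<subseteq> Sigma {t. h t = 0} (\<lambda>t. {0, - b t / a t})"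
    by auto
  then have fin: "finite {(t, w). w^2 * a t + w * b t = 0 \<and> - h t = 0}"
    by (rule finite_subset) (use roots in auto)
  obtain t1 where "h t1 \<noteq> 0"
    using ex_new_if_finite[OF infinite_UNIV_char_0 roots] by blast
  show ?thesis
    unfolding G_rep_w_def sat_rep_def
  proof (intro conjI fin allI impI)
    show "poly2 (\<lambda>t w. w^2 * a t + w * b t)" "poly2 (\<lambda>t w. - h t)"
      by (intro poly2_intros poly)+
    show "\<exists>t v. v^2 * a t + v * b t \<noteq> 0 \<or> - h t \<noteq> 0"
      using \<open>h t1 \<noteq> 0\<close> by auto
    fix t w :: complex assume "(t, w) \<in> {(t, w). w \<noteq> 0}"
    then show "A1 1 t (1 / w) * - h t = - A2 1 t (1 / w) / w\<^sup>2 * (w^2 * a t + w * b t)"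
      unfolding A1 A2 by (simp add: field_simps power2_eq_square)
  qed
qed

lemma riccati_G_and_E_invariant_if_affine:
  assumes A1: "\<And>t z. A1 1 t z = a t + b t * z" and A2: "\<And>t z. A2 1 t z = h t"
    and poly: "poly2 (\<lambda>t w. a t)" "poly2 (\<lambda>t w. b t)" "poly2 (\<lambda>t w. h t)"
    and roots: "finite {t. h t = 0}"
    and zeros: "finite {(t, z). A1 1 t z = 0 \<and> A2 1 t z = 0}"
  shows "riccati_G A1 A2 \<and> E_invariant A1 A2"
proof -
  have rep_w: "G_rep_w A1 A2 (\<lambda>t w. w^2 * a t + w * b t) (\<lambda>t w. - h t)"
    using A1 A2 poly roots zeros by (rule G_rep_w_if_affine)
  obtain t1 where "h t1 \<noteq> 0"
    using ex_new_if_finite[OF infinite_UNIV_char_0 roots] by blast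
  have rep_z: "G_rep_z A1 A2 (\<lambda>t z. A1 1 t z) (\<lambda>t z. A2 1 t z)"
    unfolding G_rep_z_def sat_rep_def
  proof (intro conjI zeros allI impI)
    show "poly2 (\<lambda>t z. A1 1 t z)" "poly2 (\<lambda>t z. A2 1 t z)"
      unfolding A1 A2 by (intro poly2_intros poly)+
    show "\<exists>t v. A1 1 t v \<noteq> 0 \<or> A2 1 t v \<noteq> 0"
      using \<open>h t1 \<noteq> 0\<close> by (auto simp: A2)
  qed (simp add: mult.commute)
  have "riccati_G A1 A2"
    unfolding riccati_G_def
    using rep_z rep_w roots by (intro exI conjI) (auto simp: A2)
  moreover have "invariant_curve2 (\<lambda>t w. w^2 * a t + w * b t) (\<lambda>t w. - h t) (\<lambda>t w. w)"
    unfolding invariant_curve2_def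
  proof (intro exI conjI allI)
    show "poly2 (\<lambda>t w. w * a t + b t)" by (intro poly2_intros poly)
    show "(w^2 * a t + w * b t) * deriv (\<lambda>s. s) w - - h t * deriv (\<lambda>s. w) t
        = w * (w * a t + b t)" for t w
      by (simp add: power2_eq_square algebra_simps)
  qed
  ultimately show ?thesis
    unfolding E_invariant_def using rep_w by blast
qed

lemma riccati_G_imp_A2_chart_nonvanishing:
  assumes "riccati_G A1 A2" and zeros: "finite {(t, z). A1 1 t z = 0 \<and> A2 1 t z = 0}"
  obtains X where "finite X" "\<And>t z. t \<notin> X \<Longrightarrow> A2 1 t z \<noteq> 0"
proof -
  obtain P Q P' Q' S where rep: "G_rep_z A1 A2 P Q" and "finite S"
    and transverse: "\<And>t z. t \<notin> S \<Longrightarrow> Q t z \<noteq> 0"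
    using assms(1) unfolding riccati_G_def by blast
  have proportional: "A1 1 t z * Q t z = A2 1 t z * P t z" for t z
    using rep unfolding G_rep_z_def sat_rep_def by blast
  let ?X = "S \<union> fst ` {(t, z). A1 1 t z = 0 \<and> A2 1 t z = 0}"
  show ?thesis
  proof (rule that[of ?X])
    show "finite ?X" using \<open>finite S\<close> zeros by blast
    fix t z assume "t \<notin> ?X"
    then show "A2 1 t z \<noteq> 0"
      using proportional[of t z] transverse[of t z] by force
  qed
qed

lemma G_rep_w_top_coeff_mult_eq_0:
  assumes rep: "G_rep_w A1 A2 P Q" and P: "\<And>t w. P t w = w * T t w" and "poly2 T"
    and A1: "\<And>t z. A1 1 t z = (\<Sum>c\<le>m. p c t * z^c)" and A2: "\<And>t z. A2 1 t z = h t"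
    and m: "2 \<le> m"
  shows "p m t * Q t 0 = 0"
proof -
  obtain n where m_Suc: "m = Suc n" using m by (cases m) auto
  have "poly2 Q" and proportional: "\<And>w. w \<noteq> 0 \<Longrightarrow>
      A1 1 t (1 / w) * Q t w = - A2 1 t (1 / w) / w^2 * P t w"
    using rep unfolding G_rep_w_def sat_rep_def by auto
  \<comment> \<open>Multiplied by \<open>w ^ m\<close>, the proportionality on \<open>w \<noteq> 0\<close> extends continuously
    to \<open>w = 0\<close>, where it reads \<open>p m t * Q t 0 = 0\<close>.\<close>
  define \<phi> where "\<phi> w = (\<Sum>c\<le>m. p c t * w^(m - c)) * Q t w + h t * T t w * w^(m - 1)" for w
  have "continuous_on UNIV \<phi>"
    unfolding \<phi>_def
    using poly2_continuous_on_second[OF \<open>poly2 Q\<close>] poly2_continuous_on_second[OF \<open>poly2 T\<close>]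
    by (intro continuous_intros) auto
  moreover have "\<phi> w = 0" if "w \<noteq> 0" for w
  proof -
    have cleared: "A1 1 t (1 / w) * Q t w * w = - h t * T t w"
      using proportional[OF that] that by (simp add: A2 P power2_eq_square field_simps)
    have "(\<Sum>c\<le>m. p c t * w^(m - c)) = A1 1 t (1 / w) * w^m"
      unfolding A1 sum_distrib_right
      by (intro sum.cong refl) (simp add: that power_diff power_one_over field_simps)
    then have "(\<Sum>c\<le>m. p c t * w^(m - c)) * Q t w = (A1 1 t (1 / w) * Q t w * w) * w^n"
      by (simp add: m_Suc mult_ac)
    also have "\<dots> = - h t * T t w * w^(m - 1)"
      by (simp add: cleared m_Suc)
    finally show ?thesis
      unfolding \<phi>_def by simp
  qed
  ultimately have "\<phi> 0 = 0"
    by (rule continuous_on_UNIV_eq_off_point)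
  moreover have "(\<Sum>c\<le>m. p c t * 0^(m - c)) = p m t"
    by (rule trans[OF sum_eq_single_nonzero[of _ m]]) auto
  ultimately show ?thesis
    using m by (simp add: \<phi>_def power_0_left del: One_nat_def)
qed

lemma E_invariant_imp_top_coeff_finite_support:
  assumes E: "E_invariant A1 A2"
    and A1: "\<And>t z. A1 1 t z = (\<Sum>c\<le>m. p c t * z^c)" and A2: "\<And>t z. A2 1 t z = h t"
    and m: "2 \<le> m"
  shows "finite {t. p m t \<noteq> 0}"
proof -
  obtain P Q where rep: "G_rep_w A1 A2 P Q" and inv: "invariant_curve2 P Q (\<lambda>t w. w)"
    using E unfolding E_invariant_def by blast
  have zeros: "finite {(t, w). P t w = 0 \<and> Q t w = 0}"
    using rep unfolding G_rep_w_def sat_rep_def by blast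
  obtain T where "poly2 T"
    and "\<And>t w. P t w * deriv (\<lambda>s. s) w - Q t w * deriv (\<lambda>s. w) t = w * T t w"
    using inv unfolding invariant_curve2_def by blast
  then have P: "P t w = w * T t w" for t w by simp
  have "p m t * Q t 0 = 0" for t
    by (rule G_rep_w_top_coeff_mult_eq_0[OF rep P \<open>poly2 T\<close> A1 A2 m])
  then have "{t. p m t \<noteq> 0} \<subseteq> fst ` {(t, w). P t w = 0 \<and> Q t w = 0}"
    by (force simp: P)
  from this zeros show ?thesis
    by (rule finite_subset[OF _ finite_imageI])
qed

section \<open>Foliations of normal degree d on P(1,1,k) in coordinates\<close>

locale weighted_foliation =
  C0: weighted_coeffs k "d - 1" M C0 + C1: weighted_coeffs k "d - 1" M C1 +
  C2: weighted_coeffs k "d - int k" M C2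
  for k :: nat and d :: int and M :: nat and C0 C1 C2 +
  fixes A0 A1 A2 :: cfun3
  assumes A0_expansion: "\<And>x y z. A0 x y z = (\<Sum>c\<le>M. level M C0 c x y * z^c)"
    and A1_expansion: "\<And>x y z. A1 x y z = (\<Sum>c\<le>M. level M C1 c x y * z^c)"
    and A2_expansion: "\<And>x y z. A2 x y z = (\<Sum>c\<le>M. level M C2 c x y * z^c)"
    and euler: "\<And>x y z. x * A0 x y z + y * A1 x y z + of_nat k * z * A2 x y z = 0"
    and chart_zeros_finite: "finite {(t, z). A1 1 t z = 0 \<and> A2 1 t z = 0}"
begin

lemma poly3_A0: "poly3 A0" and poly3_A1: "poly3 A1" and poly3_A2: "poly3 A2"
proof -
  have "A0 = (\<lambda>x y z. \<Sum>c\<le>M. level M C0 c x y * z^c)" "A1 = (\<lambda>x y z. \<Sum>c\<le>M. level M C1 c x y * z^c)"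
    "A2 = (\<lambda>x y z. \<Sum>c\<le>M. level M C2 c x y * z^c)"
    using A0_expansion A1_expansion A2_expansion by blast+
  then show "poly3 A0" "poly3 A1" "poly3 A2"
    by (simp_all only: poly3_level_expansion)
qed

lemma euler_level:
  "x * level M C0 (Suc c) x y + y * level M C1 (Suc c) x y + of_nat k * level M C2 c x y = 0"
proof -
  have "(\<Sum>c\<le>M. (x * level M C0 c x y + y * level M C1 c x y) * z^c)
      + z * (\<Sum>c\<le>M. (of_nat k * level M C2 c x y) * z^c) = 0" for z
    using euler[of x y z]
    unfolding A0_expansion A1_expansion A2_expansion sum_distrib_left distrib_right sum.distrib
    by (simp add: mult_ac)
  note shifted = polyfun_plus_shift_eq_0[OF this]
  show ?thesis
  proof (cases "c < M")
    case True
    then show ?thesis using shifted(1) by simp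
  next
    case False
    then show ?thesis
      using shifted(2) C0.level_above C1.level_above C2.level_above
      by (cases "c = M") simp_all
  qed
qed

definition active_levels :: "nat set" where
  "active_levels = {c. \<exists>a b. C0 a b c \<noteq> 0 \<or> C1 a b c \<noteq> 0}"

definition top_level :: nat where
  "top_level = Max active_levels"

lemma active_levels_finite: "finite active_levels"
proof (rule finite_subset)
  show "active_levels \<subseteq> {..M}"
    unfolding active_levels_def using C0.coeff_bounded(3) C1.coeff_bounded(3) by auto
qed simp

lemma active_levels_nonempty: "active_levels \<noteq> {}"
proof
  assume "active_levels = {}"
  then have "A0 x y z = 0" "A1 x y z = 0" for x y z
    unfolding A0_expansion A1_expansion level_def active_levels_def by simp_all
  then have "A2 1 t 1 = 0" for t
    using euler[of 1 t 1] C0.k_pos by simp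
  moreover obtain t where "(t, 1) \<notin> {(t, z). A1 1 t z = 0 \<and> A2 1 t z = 0}"
    using ex_not_in_finite_image[OF chart_zeros_finite, of "\<lambda>t. (t, 1)"] by (auto simp: inj_on_def)
  ultimately show False
    using \<open>\<And>x y z. A1 x y z = 0\<close> by simp
qed

lemma active_coeff_weight:
  "C0 a b c \<noteq> 0 \<or> C1 a b c \<noteq> 0 \<Longrightarrow> int a + int b + int k * int c = d - 1"
  using C0.support C1.support by blast

lemma top_level_eq_1_iff:
  "top_level = 1 \<longleftrightarrow>
     (\<forall>c a b. 2 \<le> c \<longrightarrow> C0 a b c = 0 \<and> C1 a b c = 0) \<and> (\<exists>a b. C0 a b 1 \<noteq> 0 \<or> C1 a b 1 \<noteq> 0)"
proof -
  have "(\<forall>c\<in>active_levels. c \<le> 1) \<longleftrightarrow> (\<forall>c a b. 2 \<le> c \<longrightarrow> C0 a b c = 0 \<and> C1 a b c = 0)"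
  proof
    assume le: "\<forall>c\<in>active_levels. c \<le> 1"
    show "\<forall>c a b. 2 \<le> c \<longrightarrow> C0 a b c = 0 \<and> C1 a b c = 0"
    proof (intro allI impI)
      fix c a b :: nat assume "2 \<le> c"
      with le have "c \<notin> active_levels" by fastforce
      then show "C0 a b c = 0 \<and> C1 a b c = 0" unfolding active_levels_def by blast
    qed
  next
    assume high: "\<forall>c a b. 2 \<le> c \<longrightarrow> C0 a b c = 0 \<and> C1 a b c = 0"
    show "\<forall>c\<in>active_levels. c \<le> 1"
    proof
      fix c assume "c \<in> active_levels"
      then obtain a b where "C0 a b c \<noteq> 0 \<or> C1 a b c \<noteq> 0" unfolding active_levels_def by blast
      with high have "\<not> 2 \<le> c" by blast
      then show "c \<le> 1" by simp
    qed
  qed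
  moreover have "1 \<in> active_levels \<longleftrightarrow> (\<exists>a b. C0 a b 1 \<noteq> 0 \<or> C1 a b 1 \<noteq> 0)"
    by (simp add: active_levels_def)
  ultimately show ?thesis
    unfolding top_level_def Max_eq_iff[OF active_levels_finite active_levels_nonempty] by blast
qed

lemma alg_mult_p2_eq:
  assumes "alg_mult_p2 A0 A1 r"
  shows "int r = d - int k * int top_level"
proof -
  obtain c0 c1 N where box: "\<forall>i j. N < i \<or> N < j \<longrightarrow> c0 i j = 0 \<and> c1 i j = 0"
    and chart0: "\<forall>x y. A0 x y 1 = (\<Sum>i\<le>N. \<Sum>j\<le>N. c0 i j * x^i * y^j)"
    and chart1: "\<forall>x y. A1 x y 1 = (\<Sum>i\<le>N. \<Sum>j\<le>N. c1 i j * x^i * y^j)"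
    and r: "r = (LEAST s. 1 \<le> s \<and> (\<exists>i j. i + j + 1 = s \<and> (c0 i j \<noteq> 0 \<or> c1 i j \<noteq> 0)))"
    using assms unfolding alg_mult_p2_def by blast
  have "c0 i j = (\<Sum>c\<le>M. C0 i j c)" "c1 i j = (\<Sum>c\<le>M. C1 i j c)" for i j
    using box chart0 chart1
    by (auto intro!: C0.chart_coeffs_eq_sum_levels[OF A0_expansion]
                     C1.chart_coeffs_eq_sum_levels[OF A1_expansion])
  then have nonzero_iff: "(c0 i j \<noteq> 0 \<or> c1 i j \<noteq> 0) \<longleftrightarrow> (\<exists>c. C0 i j c \<noteq> 0 \<or> C1 i j c \<noteq> 0)" for i j
    using C0.sum_levels_eq_0_iff C1.sum_levels_eq_0_iff by auto
  obtain a b where top: "C0 a b top_level \<noteq> 0 \<or> C1 a b top_level \<noteq> 0"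
    using Max_in[OF active_levels_finite active_levels_nonempty]
    unfolding top_level_def active_levels_def by auto
  have "r = a + b + 1"
    unfolding r
  proof (rule Least_equality)
    show "1 \<le> a + b + 1 \<and> (\<exists>i j. i + j + 1 = a + b + 1 \<and> (c0 i j \<noteq> 0 \<or> c1 i j \<noteq> 0))"
    proof -
      have "c0 a b \<noteq> 0 \<or> c1 a b \<noteq> 0" using top nonzero_iff[of a b] by blast
      then show ?thesis by auto
    qed
    fix s assume "1 \<le> s \<and> (\<exists>i j. i + j + 1 = s \<and> (c0 i j \<noteq> 0 \<or> c1 i j \<noteq> 0))"
    then obtain i j c where s: "s = i + j + 1" and active: "C0 i j c \<noteq> 0 \<or> C1 i j c \<noteq> 0"
      using nonzero_iff by blast
    then have "c \<in> active_levels" unfolding active_levels_def by blast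
    then have "c \<le> top_level"
      unfolding top_level_def using active_levels_finite by simp
    then have "int k * int c \<le> int k * int top_level" by (simp add: mult_left_mono)
    then show "a + b + 1 \<le> s"
      using active_coeff_weight[OF top] active_coeff_weight[OF active] s by linarith
  qed
  then show ?thesis using active_coeff_weight[OF top] by simp
qed

lemma top_level_eq_1_imp_A2_eq_level_0:
  assumes "top_level = 1" shows "A2 x y z = level M C2 0 x y"
proof -
  have high: "C0 a b c = 0" "C1 a b c = 0" if "2 \<le> c" for a b c
    using assms that unfolding top_level_eq_1_iff by blast+
  have "level M C2 c x y = 0" if "1 \<le> c" for c
  proof -
    have "level M C0 (Suc c) x y = 0" "level M C1 (Suc c) x y = 0"
      using that high by (simp_all add: level_def)
    then show ?thesis
      using euler_level[of x c y] C0.k_pos by simp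
  qed
  then have "(\<Sum>c\<le>M. level M C2 c x y * z^c) = level M C2 0 x y * z^0"
    by (intro sum_eq_single_nonzero) auto
  then show ?thesis by (simp add: A2_expansion)
qed

lemma top_level_eq_1_imp_A1_affine:
  assumes "top_level = 1" shows "A1 x y z = level M C1 0 x y + level M C1 1 x y * z"
proof -
  have high: "C1 a b c = 0" if "2 \<le> c" for a b c
    using assms that unfolding top_level_eq_1_iff by blast
  have "(\<Sum>c\<le>M. level M C1 c x y * z^c) = (\<Sum>c\<le>max M 1. level M C1 c x y * z^c)"
    by (rule sum.mono_neutral_left) (auto simp: C1.level_above)
  also have "\<dots> = (\<Sum>c\<in>{0, 1}. level M C1 c x y * z^c)"
    by (rule sum.mono_neutral_right) (auto simp: level_def high)
  finally show ?thesis by (simp add: A1_expansion)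
qed

lemma top_level_eq_1_imp_level_0_chart_nonzero:
  assumes "top_level = 1" shows "\<exists>t. level M C2 0 1 t \<noteq> 0"
proof (rule ccontr)
  assume "\<nexists>t. level M C2 0 1 t \<noteq> 0"
  then have A2: "A2 1 t z = 0" for t z
    using top_level_eq_1_imp_A2_eq_level_0[OF assms] by simp
  show False
  proof (cases "\<exists>t. level M C1 1 1 t \<noteq> 0")
    case True
    let ?a = "level M C1 0 1" and ?b = "level M C1 1 1"
    have "{t. ?b t \<noteq> 0} \<subseteq> fst ` {(t, z). A1 1 t z = 0 \<and> A2 1 t z = 0}"
    proof
      fix t assume "t \<in> {t. ?b t \<noteq> 0}"
      then have "(t, - ?a t / ?b t) \<in> {(t, z). A1 1 t z = 0 \<and> A2 1 t z = 0}"
        using top_level_eq_1_imp_A1_affine[OF assms] A2 by simp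
      then show "t \<in> fst ` {(t, z). A1 1 t z = 0 \<and> A2 1 t z = 0}" by force
    qed
    then have "finite {t. ?b t \<noteq> 0}"
      using chart_zeros_finite by (rule finite_subset[OF _ finite_imageI])
    then have "infinite {t. ?b t = 0}"
      by (rule infinite_zeros_if_finite_nonzeros)
    with True level_chart_finite_roots show False by blast
  next
    case False
    then have "level M C1 1 1 t = 0" for t by simp
    moreover have "level M C2 0 1 t = 0" for t
      using \<open>\<nexists>t. level M C2 0 1 t \<noteq> 0\<close> by simp
    ultimately have "level M C0 1 1 t = 0" for t
      using euler_level[of 1 0 t] by simp
    then have "C0 a b 1 = 0" "C1 a b 1 = 0" for a b
      using C0.coeff_eq_0_if_level_chart_eq_0 C1.coeff_eq_0_if_level_chart_eq_0
        \<open>\<And>t. level M C1 1 1 t = 0\<close> by blast+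
    then show False
      using assms unfolding top_level_eq_1_iff by blast
  qed
qed

lemma top_level_eq_1_imp_riccati_G_and_E_invariant:
  assumes "top_level = 1" shows "riccati_G A1 A2 \<and> E_invariant A1 A2"
proof (rule riccati_G_and_E_invariant_if_affine)
  show "A1 1 t z = level M C1 0 1 t + level M C1 1 1 t * z" for t z
    by (rule top_level_eq_1_imp_A1_affine[OF assms])
  show "A2 1 t z = level M C2 0 1 t" for t z
    by (rule top_level_eq_1_imp_A2_eq_level_0[OF assms])
  show "finite {t. level M C2 0 1 t = 0}"
    using top_level_eq_1_imp_level_0_chart_nonzero[OF assms] level_chart_finite_roots by blast
qed (simp_all add: poly2_level_chart chart_zeros_finite)

lemma riccati_G_imp_A2_levels_vanish:
  assumes "riccati_G A1 A2" and "1 \<le> c" shows "C2 a b c = 0"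
proof (cases "c \<le> M")
  case True
  obtain X where X: "finite X" "\<And>t z. t \<notin> X \<Longrightarrow> A2 1 t z \<noteq> 0"
    using riccati_G_imp_A2_chart_nonvanishing[OF assms(1) chart_zeros_finite] by blast
  have "UNIV - X \<subseteq> {t. level M C2 c 1 t = 0}"
  proof
    fix t assume "t \<in> UNIV - X"
    then have "(\<Sum>c\<le>M. level M C2 c 1 t * z^c) \<noteq> 0" for z
      using X(2) by (simp add: A2_expansion)
    then show "t \<in> {t. level M C2 c 1 t = 0}"
      using polyfun_no_roots_imp_constant[where q = "\<lambda>c. level M C2 c 1 t" and n = M and c = c] assms(2) True by simp
  qed
  moreover have "infinite (UNIV - X)"
    by (rule Diff_infinite_finite[OF X(1) infinite_UNIV_char_0])
  ultimately have "infinite {t. level M C2 c 1 t = 0}"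
    by (rule infinite_super)
  then show ?thesis by (rule C2.coeff_eq_0_if_infinite_chart_roots)
next
  case False
  then show ?thesis using C2.coeff_bounded(3) by force
qed

lemma riccati_G_imp_level_0_chart_nonzero:
  assumes "riccati_G A1 A2" shows "\<exists>t. level M C2 0 1 t \<noteq> 0"
proof -
  obtain X where X: "finite X" "\<And>t z. t \<notin> X \<Longrightarrow> A2 1 t z \<noteq> 0"
    using riccati_G_imp_A2_chart_nonvanishing[OF assms chart_zeros_finite] by blast
  obtain t where "t \<notin> X"
    using ex_new_if_finite[OF infinite_UNIV_char_0 X(1)] by blast
  then have "A2 1 t 0 \<noteq> 0" by (rule X(2))
  moreover have "A2 1 t 0 = level M C2 0 1 t * 0^0"
    unfolding A2_expansion by (rule sum_eq_single_nonzero) auto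
  ultimately show ?thesis by auto
qed

lemma E_invariant_imp_A1_levels_vanish:
  assumes E: "E_invariant A1 A2" and A2: "\<And>x y z. A2 x y z = level M C2 0 x y"
    and "2 \<le> c"
  shows "C1 a b c = 0"
proof (rule ccontr)
  assume "C1 a b c \<noteq> 0"
  let ?L = "{c. \<exists>a b. C1 a b c \<noteq> 0}"
  define m where "m = Max ?L"
  have "finite ?L"
    by (rule finite_subset[of _ "{..M}"]) (auto dest: C1.coeff_bounded(3))
  then have "m \<in> ?L"
    using \<open>C1 a b c \<noteq> 0\<close> unfolding m_def by (intro Max_in) auto
  have above_m: "c' \<le> m" if "C1 a' b' c' \<noteq> 0" for a' b' c'
    using \<open>finite ?L\<close> that unfolding m_def by (auto intro: Max_ge)
  then have "c \<le> m" using \<open>C1 a b c \<noteq> 0\<close> .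
  have "m \<le> M" using \<open>m \<in> ?L\<close> C1.coeff_bounded(3) by blast
  have "A1 1 t z = (\<Sum>c\<le>m. level M C1 c 1 t * z^c)" for t z
    unfolding A1_expansion
  proof (rule sum.mono_neutral_right)
    show "\<forall>i\<in>{..M} - {..m}. level M C1 i 1 t * z^i = 0"
      using above_m by (force simp: level_def intro!: sum.neutral)
  qed (use \<open>m \<le> M\<close> in auto)
  then have "finite {t. level M C1 m 1 t \<noteq> 0}"
    using \<open>2 \<le> c\<close> \<open>c \<le> m\<close> A2
    by (intro E_invariant_imp_top_coeff_finite_support[OF E, where h = "level M C2 0 1"]) auto
  then have "C1 a' b' m = 0" for a' b'
    by (intro C1.coeff_eq_0_if_infinite_chart_roots infinite_zeros_if_finite_nonzeros)
  with \<open>m \<in> ?L\<close> show False by blast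
qed

lemma riccati_G_and_E_invariant_imp_top_level_eq_1:
  assumes R: "riccati_G A1 A2" and E: "E_invariant A1 A2" shows "top_level = 1"
proof -
  have C2_high: "level M C2 c x y = 0" if "1 \<le> c" for c x y
    using riccati_G_imp_A2_levels_vanish[OF R that] by (simp add: level_def)
  have A2: "A2 x y z = level M C2 0 x y" for x y z
  proof -
    have "A2 x y z = level M C2 0 x y * z^0"
      unfolding A2_expansion by (rule sum_eq_single_nonzero) (auto simp: C2_high)
    then show ?thesis by simp
  qed
  have C1_high: "C1 a b c = 0" if "2 \<le> c" for a b c
    by (rule E_invariant_imp_A1_levels_vanish[OF E A2 that])
  have C0_high: "C0 a b c = 0" if "2 \<le> c" for a b c
  proof (rule C0.coeff_eq_0_if_level_chart_eq_0)
    fix t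
    obtain c' where c': "c = Suc c'" "1 \<le> c'" using \<open>2 \<le> c\<close> by (cases c) auto
    have "level M C1 c 1 t = 0" using C1_high \<open>2 \<le> c\<close> by (simp add: level_def)
    then show "level M C0 c 1 t = 0"
      using euler_level[of 1 c' t] C2_high[OF c'(2)] c'(1) by simp
  qed
  have "\<exists>a b. C0 a b 1 \<noteq> 0 \<or> C1 a b 1 \<noteq> 0"
  proof (rule ccontr)
    assume "\<not> ?thesis"
    then have "level M C0 1 x y = 0" "level M C1 1 x y = 0" for x y
      by (simp_all add: level_def)
    then have "level M C2 0 1 t = 0" for t
      using euler_level[of 1 0 t] C0.k_pos by simp
    with riccati_G_imp_level_0_chart_nonzero[OF R] show False by blast
  qed
  with C0_high C1_high show ?thesis
    unfolding top_level_eq_1_iff by blast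
qed

lemma riccati_G_and_E_invariant_iff_top_level_eq_1:
  "riccati_G A1 A2 \<and> E_invariant A1 A2 \<longleftrightarrow> top_level = 1"
  using riccati_G_and_E_invariant_imp_top_level_eq_1 top_level_eq_1_imp_riccati_G_and_E_invariant
  by blast

lemma top_level_eq_1_imp_has_invariant_line:
  assumes "top_level = 1" shows "has_invariant_line A0 A1 A2"
proof -
  obtain a b where "C0 a b 1 \<noteq> 0 \<or> C1 a b 1 \<noteq> 0"
    using assms unfolding top_level_eq_1_iff by blast
  from active_coeff_weight[OF this] have "1 \<le> d - int k" by simp
  define n where "n = nat (d - int k)"
  have "1 \<le> n" "n \<le> M" using \<open>1 \<le> d - int k\<close> C2.degree_le by (simp_all add: n_def)
  have "a + b = n" if "C2 a b 0 \<noteq> 0" for a b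
    using C2.support[OF that] by (simp add: n_def)
  then obtain \<alpha> \<beta> where line: "(\<alpha>, \<beta>) \<noteq> (0, 0)"
    and vanish: "\<And>x y. \<alpha> * x + \<beta> * y = 0 \<Longrightarrow> level M C2 0 x y = 0"
    using level_vanishes_on_line \<open>1 \<le> n\<close> \<open>n \<le> M\<close> by blast
  have "invariant_curve A0 A1 A2 (\<lambda>x0 x1 x2. \<alpha> * x0 + \<beta> * x1)"
    using poly3_A0 poly3_A1 poly3_A2 euler line
    by (rule invariant_line_if_A2_vanishes_on_line)
       (simp add: vanish top_level_eq_1_imp_A2_eq_level_0[OF assms])
  with line show ?thesis
    unfolding has_invariant_line_def by blast
qed

end

lemma foliation_P11k_weighted_foliation:
  assumes "1 \<le> k" and fol: "foliation_P11k k d A0 A1 A2" and sat: "saturated_fol k A0 A1 A2"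
  obtains C0 C1 C2 where "weighted_foliation k d (nat d) C0 C1 C2 A0 A1 A2"
proof -
  have q0: "qhom k (d - 1) A0" and q1: "qhom k (d - 1) A1" and q2: "qhom k (d - int k) A2"
    and euler: "\<And>x y z. x * A0 x y z + y * A1 x y z + of_nat k * z * A2 x y z = 0"
    using fol unfolding foliation_P11k_def by blast+
  have bound1: "d - 1 \<le> int (nat d)" and bound2: "d - int k \<le> int (nat d)" by linarith+
  obtain C0 where s0: "\<And>a b c. C0 a b c \<noteq> 0 \<Longrightarrow> int a + int b + int k * int c = d - 1"
    and e0: "\<And>x y z. A0 x y z = (\<Sum>c\<le>nat d. level (nat d) C0 c x y * z^c)"
    using qhom_expansion[OF q0 \<open>1 \<le> k\<close> bound1] by blast
  obtain C1 where s1: "\<And>a b c. C1 a b c \<noteq> 0 \<Longrightarrow> int a + int b + int k * int c = d - 1"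
    and e1: "\<And>x y z. A1 x y z = (\<Sum>c\<le>nat d. level (nat d) C1 c x y * z^c)"
    using qhom_expansion[OF q1 \<open>1 \<le> k\<close> bound1] by blast
  obtain C2 where s2: "\<And>a b c. C2 a b c \<noteq> 0 \<Longrightarrow> int a + int b + int k * int c = d - int k"
    and e2: "\<And>x y z. A2 x y z = (\<Sum>c\<le>nat d. level (nat d) C2 c x y * z^c)"
    using qhom_expansion[OF q2 \<open>1 \<le> k\<close> bound2] by blast
  show ?thesis
    by (rule that[of C0 C1 C2], unfold_locales)
      (fact \<open>1 \<le> k\<close> bound1 bound2 s0 s1 s2 e0 e1 e2 euler
        saturated_fol_chart_zeros_finite[OF sat euler])+
qed

theorem corollary3p4:
  fixes k :: nat and d :: int and r :: nat and A0 A1 A2 :: cfun3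
  assumes "k \<ge> 2"
    and "foliation_P11k k d A0 A1 A2"
    and "saturated_fol k A0 A1 A2"
    and "alg_mult_p2 A0 A1 r"
  shows "((riccati_G A1 A2 \<and> E_invariant A1 A2) \<longleftrightarrow> int r = d - int k) \<and>
         (int r = d - int k \<longrightarrow> has_invariant_line A0 A1 A2)"
proof -
  have k: "1 \<le> k" using assms(1) by simp
  obtain C0 C1 C2 where "weighted_foliation k d (nat d) C0 C1 C2 A0 A1 A2"
    using foliation_P11k_weighted_foliation[OF k assms(2,3)] .
  then interpret weighted_foliation k d "nat d" C0 C1 C2 A0 A1 A2 .
  have "int r = d - int k \<longleftrightarrow> top_level = 1"
    using alg_mult_p2_eq[OF assms(4)] k by simp
  then show ?thesis
    using riccati_G_and_E_invariant_iff_top_level_eq_1 top_level_eq_1_imp_has_invariant_line by blast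
qed

end
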